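(* Let $K$ be a field of characteristic $\neq2$ with involution $a\mapsto\bar a$ (possibly the identity), and let $p(x)\in K[x]$ be an irreducible polynomial with $p(x)=p^\vee(x)$ of degree $2r$ or $2r+1$. Consider the field $K(\kappa)=K[x]/p(x)K[x]$ ($\kappa$ the class of $x$) with involution $f(\kappa)^\circ=\bar f(\kappa^{-1})$. Then every element $c\in K(\kappa)$ with $c^\circ=c$ is uniquely representable in the form $q(\kappa)$, where $q(x)=\bar a_rx^{-r}+\dots+\bar a_1x^{-1}+a_0+a_1x+\dots+a_rx^r$ with $a_0=\bar a_0$, $a_1,\dots,a_r\in K$, and, when $\deg p=2r$: (a) $a_r=0$ if the involution on $K$ is the identity; (b) $a_r=\bar a_r$ if the involution on $K$ is nonidentity and $p(0)\ne1$; (c) $a_r=-\bar a_r$ if the involution on $K$ is nonidentity and $p(0)=1$.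
   Context: For $f(x)=a_0x^n+\dots+a_n\in K[x]$: $\bar f(x)=\bar a_0x^n+\dots+\bar a_n$, and if $a_n\ne0$, $f^\vee(x)=\bar a_n^{-1}(\bar a_nx^n+\dots+\bar a_1x+\bar a_0)$. The involution $f(\kappa)^\circ=\bar f(\kappa^{-1})$ is well defined because $p=p^\vee$. *)

theory Defs
  imports "HOL-Computational_Algebra.Polynomial"
begin

definition involution :: "('a::field \<Rightarrow> 'a) \<Rightarrow> bool" where
  "involution \<sigma> \<longleftrightarrow> (\<forall>a b. \<sigma> (a + b) = \<sigma> a + \<sigma> b) \<and>
     (\<forall>a b. \<sigma> (a * b) = \<sigma> a * \<sigma> b) \<and> (\<forall>a. \<sigma> (\<sigma> a) = a)"

definition conj_poly :: "('a::field \<Rightarrow> 'a) \<Rightarrow> 'a poly \<Rightarrow> 'a poly" where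
  "conj_poly \<sigma> f = map_poly \<sigma> f"

text \<open>f-vee(x) = conj(a_n)^(-1) (conj(a_n) x^n + ... + conj(a_0)), where a_n = f(0)
  is the constant term (meaningful when f(0) is nonzero).\<close>
definition vee :: "('a::field \<Rightarrow> 'a) \<Rightarrow> 'a poly \<Rightarrow> 'a poly" where
  "vee \<sigma> f = smult (inverse (\<sigma> (coeff f 0))) (reflect_poly (conj_poly \<sigma> f))"

text \<open>Elements of K(kappa) = K[x]/(p) are represented by polynomials; two
  representatives are equal in K(kappa) iff they are congruent modulo p.\<close>
definition eq_mod :: "'a::field poly \<Rightarrow> 'a poly \<Rightarrow> 'a poly \<Rightarrow> bool" where
  "eq_mod p f g \<longleftrightarrow> f mod p = g mod p"

definition kappa_inv :: "'a::field poly \<Rightarrow> 'a poly" where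
  "kappa_inv p = (SOME u. eq_mod p ([:0, 1:] * u) 1)"

definition circ :: "('a::field \<Rightarrow> 'a) \<Rightarrow> 'a poly \<Rightarrow> 'a poly \<Rightarrow> 'a poly" where
  "circ \<sigma> p f = pcompose (conj_poly \<sigma> f) (kappa_inv p)"

definition q_elem :: "('a::field \<Rightarrow> 'a) \<Rightarrow> 'a poly \<Rightarrow> nat \<Rightarrow> (nat \<Rightarrow> 'a) \<Rightarrow> 'a poly" where
  "q_elem \<sigma> p r a = [:a 0:] +
     (\<Sum>i\<in>{1..r}. monom (a i) i + smult (\<sigma> (a i)) ((kappa_inv p) ^ i))"

end

theory Submission
  imports Defs "HOL-Number_Theory.Cong"
begin

text \<open>Multiplying a self-conjugate element c by \<open>\<kappa>\<^sup>r\<close> and reducing modulo p gives a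
  polynomial h of degree at most 2r with \<open>\<kappa>\<^sup>2\<^sup>r h\<^sup>\<circ> = h\<close>; the left-hand side is the
  conjugate-reversal of h, read as a polynomial of length 2r + 1.  If \<open>deg p = 2r + 1\<close> this
  congruence is an identity of polynomials, so the coefficients of h are conjugate-symmetric
  and its upper half gives the \<open>a\<^sub>i\<close>.  If \<open>deg p = 2r\<close>, the congruence holds up to a multiple
  of p, and the symmetry is restored by replacing h with \<open>h + \<lambda> p\<close>; the normalisation of
  \<open>a\<^sub>r = \<lambda>\<close> in (a)-(c) is exactly what makes this choice of \<open>\<lambda>\<close> unique.  Uniqueness in
  general follows because \<open>\<kappa>\<^sup>r q(\<kappa>)\<close> is a polynomial of degree at most 2r, so two
  representations differ by a scalar multiple of p.\<close>

lemma eq_neg_self_imp_0: "(2::'a::field) \<noteq> 0 \<Longrightarrow> x = - x \<Longrightarrow> x = (0::'a)"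
  by (metis add_eq_0_iff2 mult_2 mult_eq_0_iff)

locale field_involution =
  fixes \<sigma> :: "'a::field \<Rightarrow> 'a"
  assumes involution: "involution \<sigma>"
begin

lemma conj_add [simp]: "\<sigma> (a + b) = \<sigma> a + \<sigma> b"
  and conj_mult [simp]: "\<sigma> (a * b) = \<sigma> a * \<sigma> b"
  and conj_conj [simp]: "\<sigma> (\<sigma> a) = a"
  using involution unfolding involution_def by auto

lemma conj_0 [simp]: "\<sigma> 0 = 0"
  using conj_add[of 0 0] by (metis add_cancel_right_right)

lemma conj_eq_0_iff [simp]: "\<sigma> a = 0 \<longleftrightarrow> a = 0"
  by (metis conj_0 conj_conj)

lemma conj_1 [simp]: "\<sigma> 1 = 1"
proof -
  have "\<sigma> 1 * \<sigma> 1 = \<sigma> 1 * 1" using conj_mult[of 1 1] by simp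
  then show ?thesis by (simp only: mult_left_cancel conj_eq_0_iff one_neq_zero not_False_eq_True)
qed

lemma conj_uminus [simp]: "\<sigma> (- a) = - \<sigma> a"
  using conj_add[of a "- a"] by (simp add: eq_neg_iff_add_eq_0 add.commute)

lemma conj_diff [simp]: "\<sigma> (a - b) = \<sigma> a - \<sigma> b"
  using conj_add[of a "- b"] by simp

lemma conj_inverse [simp]: "\<sigma> (inverse a) = inverse (\<sigma> a)"
proof (cases "a = 0")
  case False
  then have "\<sigma> a * \<sigma> (inverse a) = 1" by (simp flip: conj_mult)
  then show ?thesis by (metis inverse_unique)
qed simp

lemma conj_2 [simp]: "\<sigma> 2 = 2"
  using conj_add[of 1 1] by (simp only: one_add_one conj_1)

lemma conj_divide [simp]: "\<sigma> (a / b) = \<sigma> a / \<sigma> b"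
  by (simp add: divide_inverse)

lemma conj_sum [simp]: "\<sigma> (sum f A) = (\<Sum>i\<in>A. \<sigma> (f i))"
  by (induction A rule: infinite_finite_induct) auto

lemma coeff_conj_poly [simp]: "coeff (conj_poly \<sigma> f) n = \<sigma> (coeff f n)"
  by (simp add: conj_poly_def coeff_map_poly)

lemma conj_poly_add [simp]: "conj_poly \<sigma> (f + g) = conj_poly \<sigma> f + conj_poly \<sigma> g"
  and conj_poly_diff [simp]: "conj_poly \<sigma> (f - g) = conj_poly \<sigma> f - conj_poly \<sigma> g"
  and conj_poly_mult [simp]: "conj_poly \<sigma> (f * g) = conj_poly \<sigma> f * conj_poly \<sigma> g"
  and conj_poly_const [simp]: "conj_poly \<sigma> [:c:] = [:\<sigma> c:]"
  and conj_poly_X [simp]: "conj_poly \<sigma> [:0, 1:] = [:0, 1:]"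
  by (rule poly_eqI; simp add: coeff_mult coeff_pCons split: nat.split)+

lemma conj_poly_1 [simp]: "conj_poly \<sigma> 1 = 1"
  using conj_poly_const[of 1] by (simp add: one_pCons)

lemma degree_conj_poly [simp]: "degree (conj_poly \<sigma> f) = degree f"
  unfolding conj_poly_def by (rule degree_map_poly) simp

lemma exists_normalising_scalar:
  assumes char: "(2::'a) \<noteq> 0" and norm: "c * \<sigma> c = 1" and hc: "\<sigma> h * c = - h"
    and id_imp: "(\<forall>x. \<sigma> x = x) \<Longrightarrow> c = 1"
  shows "\<exists>l. \<sigma> l = h + l * c \<and> ((\<forall>x. \<sigma> x = x) \<longrightarrow> l = 0) \<and>
    ((\<exists>x. \<sigma> x \<noteq> x) \<and> c \<noteq> 1 \<longrightarrow> l = \<sigma> l) \<and> ((\<exists>x. \<sigma> x \<noteq> x) \<and> c = 1 \<longrightarrow> l = - \<sigma> l)"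
proof (cases "\<forall>x. \<sigma> x = x")
  case True
  then have "h = - h" using hc id_imp by simp
  then have "h = 0" by (rule eq_neg_self_imp_0[OF char])
  then show ?thesis using True by (intro exI[of _ 0]) simp
next
  case nid: False
  have c: "c \<noteq> 0" using norm by auto
  show ?thesis
  proof (cases "c = 1")
    case True
    then have "\<sigma> h = - h" using hc by simp
    then show ?thesis using nid True char by (intro exI[of _ "- h / 2"]) (auto simp: field_simps)
  next
    case False
    define l where "l = h / (1 - c)"
    have "\<sigma> c = inverse c" using norm c by (simp add: field_simps)
    moreover have "\<sigma> h = - h / c" using hc c by (simp add: field_simps)
    ultimately have "\<sigma> l = (- h / c) / (1 - inverse c)" by (simp add: l_def)
    also have "\<dots> = l" using c False by (simp add: l_def field_simps)
    finally have "\<sigma> l = l" .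
    moreover have "l = h + l * c" using False by (simp add: l_def field_simps)
    ultimately show ?thesis using nid False by (intro exI[of _ l]) auto
  qed
qed

end

lemma degree_pos_if_irreducible: "irreducible (p::'a::field poly) \<Longrightarrow> degree p > 0"
  using is_unit_iff_degree[of p] by (auto simp: irreducible_def)

lemma degree_eq_1_if_irreducible_root:
  assumes irr: "irreducible (p::'a::field poly)" and root: "poly p x = 0"
  shows "degree p = 1"
proof -
  obtain w where pw: "p = [:- x, 1:] * w"
    using root poly_eq_0_iff_dvd[of p x] by (auto elim: dvdE)
  have "\<not> is_unit [:- x, 1:]" using is_unit_iff_degree[of "[:- x, 1:]"] by simp
  then have "is_unit w" using irreducibleD[OF irr pw] by blast
  moreover have "w \<noteq> 0" using pw irr by auto
  ultimately have "degree w = 0" using is_unit_iff_degree by blast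
  moreover have "degree p = degree [:- x, 1:] + degree w"
    using \<open>w \<noteq> 0\<close> by (subst pw, subst degree_mult_eq) auto
  ultimately show ?thesis by simp
qed

lemma dvd_monic_imp_eq_smult:
  fixes p f :: "'a::field poly"
  assumes "p dvd f" "degree f \<le> degree p" "lead_coeff p = 1"
  shows "f = smult (coeff f (degree p)) p"
proof (cases "f = 0")
  case False
  obtain w where fw: "f = p * w" using assms(1) by (auto elim: dvdE)
  then have "w \<noteq> 0" "p \<noteq> 0" using False by auto
  then have "degree w = 0" using fw assms(2) by (simp add: degree_mult_eq)
  then obtain c where "w = [:c:]" using degree0_coeffs by blast
  then show ?thesis using fw assms(3) by simp
qed simp

lemma cong_smult:
  "[f = g] (mod (q::'a::field poly)) \<Longrightarrow> [smult c f = smult c g] (mod q)"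
  unfolding cong_iff_dvd_diff by (metis dvd_smult smult_diff_right)

lemma pcompose_monom: "pcompose (monom c k) q = smult c (q ^ k)"
  by (induction k) (simp_all add: monom_0 monom_Suc pcompose_pCons)

lemma coeff_sum_monom_reversed:
  "coeff (\<Sum>k\<le>m. monom (g k) (m - k)) j = (if j \<le> m then g (m - j) else (0::'a::comm_ring_1))"
proof -
  have "coeff (\<Sum>k\<le>m. monom (g k) (m - k)) j = (\<Sum>k\<le>m. if k = m - j \<and> j \<le> m then g k else 0)"
    unfolding coeff_sum by (rule sum.cong) auto
  then show ?thesis by simp
qed

definition conj_reversal :: "('a::field \<Rightarrow> 'a) \<Rightarrow> nat \<Rightarrow> 'a poly \<Rightarrow> 'a poly" where
  "conj_reversal \<sigma> m h = (\<Sum>k\<le>m. monom (\<sigma> (coeff h k)) (m - k))"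

lemma coeff_conj_reversal:
  "coeff (conj_reversal \<sigma> m h) j = (if j \<le> m then \<sigma> (coeff h (m - j)) else 0)"
  unfolding conj_reversal_def coeff_sum_monom_reversed ..

lemma sum_if_unique:
  assumes "finite A" "\<And>i. i \<in> A \<Longrightarrow> P i \<longleftrightarrow> i = k"
  shows "(\<Sum>i\<in>A. if P i then f i else 0) = (if k \<in> A then f k else (0::'b::comm_monoid_add))"
proof -
  have "(\<Sum>i\<in>A. if P i then f i else 0) = (\<Sum>i\<in>A. if i = k then f i else 0)"
    using assms(2) by (intro sum.cong) auto
  then show ?thesis using assms(1) by simp
qed

text \<open>The polynomial \<open>\<kappa>\<^sup>r q(\<kappa>)\<close>, with coefficients
  \<open>\<sigma> a\<^sub>r, \<dots>, \<sigma> a\<^sub>1, a\<^sub>0, a\<^sub>1, \<dots>, a\<^sub>r\<close> in degrees \<open>0, \<dots>, 2r\<close>.\<close>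
definition shifted_q :: "('a::field \<Rightarrow> 'a) \<Rightarrow> nat \<Rightarrow> (nat \<Rightarrow> 'a) \<Rightarrow> 'a poly" where
  "shifted_q \<sigma> r a = monom (a 0) r + (\<Sum>i\<in>{1..r}. monom (a i) (r + i) + monom (\<sigma> (a i)) (r - i))"

lemma coeff_shifted_q: "coeff (shifted_q \<sigma> r a) j =
  (if r \<le> j \<and> j \<le> 2 * r then a (j - r) else if j < r then \<sigma> (a (r - j)) else 0)"
proof -
  define k1 where "k1 = (if r < j then j - r else 0)"
  define k2 where "k2 = (if j < r then r - j else 0)"
  have "coeff (shifted_q \<sigma> r a) j = (if r = j then a 0 else 0) +
     ((\<Sum>i\<in>{1..r}. if r + i = j then a i else 0) + (\<Sum>i\<in>{1..r}. if r - i = j then \<sigma> (a i) else 0))"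
    unfolding shifted_q_def by (simp add: coeff_sum coeff_monom sum.distrib)
  also have "(\<Sum>i\<in>{1..r}. if r + i = j then a i else 0) = (if k1 \<in> {1..r} then a k1 else 0)"
    by (rule sum_if_unique) (auto simp: k1_def)
  also have "(\<Sum>i\<in>{1..r}. if r - i = j then \<sigma> (a i) else 0) = (if k2 \<in> {1..r} then \<sigma> (a k2) else 0)"
    by (rule sum_if_unique) (auto simp: k2_def)
  finally show ?thesis
    unfolding k1_def k2_def by (cases "r < j"; cases "j < r") auto
qed

lemma degree_shifted_q: "degree (shifted_q \<sigma> r a) \<le> 2 * r"
  by (rule degree_le) (simp add: coeff_shifted_q)

lemma shifted_q_inj:
  assumes "\<forall>i>r. a i = 0" "\<forall>i>r. b i = 0" "shifted_q \<sigma> r a = shifted_q \<sigma> r b"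
  shows "a = b"
proof
  fix i
  have "coeff (shifted_q \<sigma> r a) (r + i) = coeff (shifted_q \<sigma> r b) (r + i)"
    using assms(3) by simp
  then show "a i = b i"
    using assms(1,2) by (cases "i \<le> r") (auto simp: coeff_shifted_q)
qed

lemma shifted_q_upper_half:
  assumes "degree h \<le> 2 * r" and sym: "\<And>j. j \<le> 2 * r \<Longrightarrow> \<sigma> (coeff h (2 * r - j)) = coeff h j"
  shows "shifted_q \<sigma> r (\<lambda>i. if i \<le> r then coeff h (r + i) else 0) = h"
proof (rule poly_eqI)
  fix j
  consider "j < r" | "r \<le> j" "j \<le> 2 * r" | "2 * r < j" by linarith
  then show "coeff (shifted_q \<sigma> r (\<lambda>i. if i \<le> r then coeff h (r + i) else 0)) j = coeff h j"
  proof cases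
    case 1
    then have "2 * r - j = r + (r - j)" by simp
    then show ?thesis using 1 sym[of j] by (simp add: coeff_shifted_q)
  next
    case 3
    then show ?thesis using assms(1) by (simp add: coeff_shifted_q coeff_eq_0)
  qed (simp add: coeff_shifted_q)
qed

definition admissible :: "('a::field \<Rightarrow> 'a) \<Rightarrow> 'a poly \<Rightarrow> nat \<Rightarrow> (nat \<Rightarrow> 'a) \<Rightarrow> bool" where
  "admissible \<sigma> p r a \<longleftrightarrow> (\<forall>i>r. a i = 0) \<and> \<sigma> (a 0) = a 0 \<and>
       (degree p = 2 * r \<longrightarrow>
          ((\<forall>x. \<sigma> x = x) \<longrightarrow> a r = 0) \<and>
          ((\<exists>x. \<sigma> x \<noteq> x) \<and> poly p 0 \<noteq> 1 \<longrightarrow> a r = \<sigma> (a r)) \<and>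
          ((\<exists>x. \<sigma> x \<noteq> x) \<and> poly p 0 = 1 \<longrightarrow> a r = - \<sigma> (a r)))"

locale self_reciprocal = field_involution \<sigma> for \<sigma> :: "'a::field \<Rightarrow> 'a" +
  fixes p :: "'a poly"
  assumes coeff_0_nonzero: "coeff p 0 \<noteq> 0"
    and p_eq_vee: "p = vee \<sigma> p"
    and degree_pos: "degree p > 0"
begin

abbreviation \<kappa> :: "'a poly" where "\<kappa> \<equiv> [:0, 1:]"
abbreviation \<kappa>inv :: "'a poly" where "\<kappa>inv \<equiv> kappa_inv p"

lemma conj_coeff_reflected: "k \<le> degree p \<Longrightarrow> \<sigma> (coeff p (degree p - k)) = \<sigma> (coeff p 0) * coeff p k"
proof -
  assume k: "k \<le> degree p"
  have "coeff p k = coeff (vee \<sigma> p) k" using p_eq_vee by simp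
  also have "\<dots> = inverse (\<sigma> (coeff p 0)) * \<sigma> (coeff p (degree p - k))"
    using k by (simp add: vee_def coeff_reflect_poly)
  finally show ?thesis using coeff_0_nonzero by (simp add: field_simps)
qed

lemma lead_coeff_eq_1: "lead_coeff p = 1"
  using conj_coeff_reflected[of "degree p"] coeff_0_nonzero by simp

lemma coeff_0_mult_conj: "coeff p 0 * \<sigma> (coeff p 0) = 1"
  using conj_coeff_reflected[of 0] lead_coeff_eq_1 by (simp add: mult.commute)

lemma coeff_0_eq_1_if_trivial_involution:
  assumes char: "(2::'a) \<noteq> 0" and irr: "irreducible p" and triv: "\<forall>x. \<sigma> x = x"
    and even: "even (degree p)"
  shows "coeff p 0 = 1"
proof -
  have triv': "\<sigma> = (\<lambda>x. x)" using triv by auto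
  have "(coeff p 0 - 1) * (coeff p 0 + 1) = 0"
    using coeff_0_mult_conj triv by (simp add: algebra_simps)
  moreover have "coeff p 0 \<noteq> - 1"
  proof
    assume m: "coeff p 0 = - 1"
    have "poly p 1 = poly (vee \<sigma> p) 1" using p_eq_vee by simp
    also have "\<dots> = - poly p 1"
      by (simp add: vee_def triv' conj_poly_def m poly_reflect_poly_nz)
    finally have "poly p 1 = 0" using char by (simp add: eq_neg_iff_add_eq_0 flip: mult_2)
    then show False using degree_eq_1_if_irreducible_root[OF irr] even by fastforce
  qed
  ultimately show ?thesis by (simp add: eq_neg_iff_add_eq_0)
qed

text \<open>\<open>kappa_inv p\<close> is chosen by \<open>SOME\<close>; it is a genuine inverse of \<open>\<kappa>\<close> modulo p because
  \<open>p(0) \<noteq> 0\<close>.\<close>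
lemma kappa_mult_kappa_inv: "[\<kappa> * \<kappa>inv = 1] (mod p)"
proof -
  obtain c w where pw: "p = pCons c w" by (cases p) auto
  have c: "c \<noteq> 0" using pw coeff_0_nonzero by simp
  have "\<kappa> * smult (- inverse c) w = 1 - smult (inverse c) p"
    using c pw by (simp add: smult_add_right one_pCons)
  moreover have "[1 - smult (inverse c) p = 1] (mod p)"
    unfolding cong_iff_dvd_diff by (simp add: dvd_smult)
  ultimately have "\<exists>v. eq_mod p (\<kappa> * v) 1" unfolding eq_mod_def cong_def by metis
  from someI_ex[OF this] show ?thesis unfolding kappa_inv_def eq_mod_def cong_def .
qed

lemma kappa_pow_cancel_left:
  "[\<kappa> ^ m * (\<kappa>inv ^ m * f) = f] (mod p)" "[\<kappa>inv ^ m * (\<kappa> ^ m * f) = f] (mod p)"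
proof -
  have "[(\<kappa> * \<kappa>inv) ^ m * f = 1 ^ m * f] (mod p)"
    by (intro cong_mult cong_pow kappa_mult_kappa_inv cong_refl)
  then show "[\<kappa> ^ m * (\<kappa>inv ^ m * f) = f] (mod p)" "[\<kappa>inv ^ m * (\<kappa> ^ m * f) = f] (mod p)"
    by (simp_all only: power_mult_distrib power_one mult_1_left ac_simps)
qed

lemma kappa_pow_mult_kappa_inv_pow: "i \<le> m \<Longrightarrow> [\<kappa> ^ m * \<kappa>inv ^ i = \<kappa> ^ (m - i)] (mod p)"
proof -
  assume "i \<le> m"
  then have "\<kappa> ^ m = \<kappa> ^ i * \<kappa> ^ (m - i)" by (simp flip: power_add)
  then have "\<kappa> ^ m * \<kappa>inv ^ i = \<kappa> ^ i * (\<kappa>inv ^ i * \<kappa> ^ (m - i))" by (simp only: ac_simps)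
  then show ?thesis by (simp only: kappa_pow_cancel_left(1))
qed

lemma kappa_pow_mult_cancel: "[\<kappa> ^ m * f = \<kappa> ^ m * g] (mod p) \<Longrightarrow> [f = g] (mod p)"
  using cong_trans[OF cong_trans[OF cong_sym[OF kappa_pow_cancel_left(2)] cong_mult[OF cong_refl]]
      kappa_pow_cancel_left(2)] .

text \<open>Substituting \<open>\<kappa>\<^sup>-\<^sup>1\<close> into f and clearing denominators with \<open>\<kappa>\<^sup>m\<close> reverses the
  coefficient sequence of f, read with length m + 1.\<close>
lemma kappa_pow_mult_pcompose_kappa_inv:
  assumes "degree f \<le> m"
  shows "[\<kappa> ^ m * pcompose f \<kappa>inv = (\<Sum>k\<le>m. monom (coeff f k) (m - k))] (mod p)"
proof -
  have "\<kappa> ^ m * pcompose f \<kappa>inv = (\<Sum>k\<le>m. smult (coeff f k) (\<kappa> ^ m * \<kappa>inv ^ k))"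
    by (subst poly_as_sum_of_monoms'[OF assms, symmetric])
       (simp add: pcompose_sum pcompose_monom sum_distrib_left)
  also have "[\<dots> = (\<Sum>k\<le>m. smult (coeff f k) (\<kappa> ^ (m - k)))] (mod p)"
    by (intro cong_sum cong_smult kappa_pow_mult_kappa_inv_pow) simp
  finally show ?thesis by (simp add: monom_altdef)
qed

lemma circ_diff: "circ \<sigma> p (f - g) = circ \<sigma> p f - circ \<sigma> p g"
  and circ_mult: "circ \<sigma> p (f * g) = circ \<sigma> p f * circ \<sigma> p g"
  and circ_1: "circ \<sigma> p 1 = 1"
  and circ_kappa: "circ \<sigma> p \<kappa> = \<kappa>inv"
  by (simp_all add: circ_def pcompose_diff pcompose_mult pcompose_1 pcompose_pCons)

lemma circ_power: "circ \<sigma> p (f ^ k) = circ \<sigma> p f ^ k"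
  by (induction k) (simp_all add: circ_1 circ_mult)

lemma circ_p_cong_0: "[circ \<sigma> p p = 0] (mod p)"
proof -
  have "[\<kappa> ^ degree p * circ \<sigma> p p =
      (\<Sum>k\<le>degree p. monom (coeff (conj_poly \<sigma> p) k) (degree p - k))] (mod p)"
    unfolding circ_def by (rule kappa_pow_mult_pcompose_kappa_inv) simp
  also have "(\<Sum>k\<le>degree p. monom (coeff (conj_poly \<sigma> p) k) (degree p - k)) = smult (\<sigma> (coeff p 0)) p"
    by (rule poly_eqI) (auto simp: coeff_sum_monom_reversed conj_coeff_reflected coeff_eq_0)
  also have "[smult (\<sigma> (coeff p 0)) p = \<kappa> ^ degree p * 0] (mod p)"
    by (simp add: cong_0_iff dvd_smult)
  finally show ?thesis by (rule kappa_pow_mult_cancel)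
qed

lemma circ_cong: "[f = g] (mod p) \<Longrightarrow> [circ \<sigma> p f = circ \<sigma> p g] (mod p)"
proof -
  assume "[f = g] (mod p)"
  then obtain w where "f - g = p * w" unfolding cong_iff_dvd_diff by (auto elim: dvdE)
  then have "circ \<sigma> p f - circ \<sigma> p g = circ \<sigma> p p * circ \<sigma> p w"
    by (metis circ_diff circ_mult)
  moreover have "[circ \<sigma> p p * circ \<sigma> p w = 0 * circ \<sigma> p w] (mod p)"
    by (rule cong_mult[OF circ_p_cong_0 cong_refl])
  ultimately show ?thesis by (simp add: cong_iff_dvd_diff cong_0_iff)
qed

lemma circ_kappa_inv: "[circ \<sigma> p \<kappa>inv = \<kappa>] (mod p)"
proof -
  have "[\<kappa>inv * circ \<sigma> p \<kappa>inv = 1] (mod p)"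
    using circ_cong[OF kappa_mult_kappa_inv] by (simp only: circ_mult circ_kappa circ_1)
  then have "[\<kappa> * (\<kappa>inv * circ \<sigma> p \<kappa>inv) = \<kappa> * 1] (mod p)"
    by (rule cong_mult[OF cong_refl])
  with kappa_pow_cancel_left(1)[of 1 "circ \<sigma> p \<kappa>inv"] show ?thesis
    by (simp only: power_one_right mult_1_right cong_def)
qed

lemma kappa_pow_mult_q_elem: "[\<kappa> ^ r * q_elem \<sigma> p r a = shifted_q \<sigma> r a] (mod p)"
proof -
  have "\<kappa> ^ r * q_elem \<sigma> p r a = monom (a 0) r +
      (\<Sum>i\<in>{1..r}. monom (a i) (r + i) + smult (\<sigma> (a i)) (\<kappa> ^ r * \<kappa>inv ^ i))"
    by (simp add: q_elem_def distrib_left sum_distrib_left monom_altdef power_add ac_simps)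
  also have "[\<dots> = shifted_q \<sigma> r a] (mod p)"
    unfolding shifted_q_def
    by (intro cong_add cong_refl cong_sum)
       (simp add: monom_altdef cong_smult kappa_pow_mult_kappa_inv_pow)
  finally show ?thesis .
qed

lemma conj_reversal_cong_if_self_conjugate:
  assumes c: "[circ \<sigma> p c = c] (mod p)" and h: "[\<kappa> ^ r * c = h] (mod p)"
    and degh: "degree h \<le> 2 * r"
  shows "[conj_reversal \<sigma> (2 * r) h = h] (mod p)"
proof -
  have c_h: "[c = \<kappa>inv ^ r * h] (mod p)"
    using cong_trans[OF cong_sym[OF kappa_pow_cancel_left(2)] cong_mult[OF cong_refl h]] .
  have "[\<kappa> ^ r * circ \<sigma> p h = circ \<sigma> p (\<kappa>inv ^ r * h)] (mod p)"
    unfolding circ_mult circ_power by (rule cong_sym, intro cong_mult cong_pow circ_kappa_inv cong_refl)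
  also have "[circ \<sigma> p (\<kappa>inv ^ r * h) = c] (mod p)"
    using cong_trans[OF circ_cong[OF cong_sym[OF c_h]] c] .
  also note c_h
  finally have "[\<kappa> ^ r * (\<kappa> ^ r * circ \<sigma> p h) = \<kappa> ^ r * (\<kappa>inv ^ r * h)] (mod p)"
    by (rule cong_mult[OF cong_refl])
  then have "[\<kappa> ^ r * (\<kappa> ^ r * circ \<sigma> p h) = h] (mod p)"
    using kappa_pow_cancel_left(1) by (rule cong_trans)
  then have "[\<kappa> ^ (2 * r) * circ \<sigma> p h = h] (mod p)"
    by (simp only: mult_2 power_add mult.assoc)
  moreover have "[\<kappa> ^ (2 * r) * circ \<sigma> p h =
      (\<Sum>k\<le>2 * r. monom (coeff (conj_poly \<sigma> h) k) (2 * r - k))] (mod p)"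
    unfolding circ_def by (rule kappa_pow_mult_pcompose_kappa_inv) (simp add: degh)
  ultimately show ?thesis
    using cong_trans[OF cong_sym] by (simp add: conj_reversal_def)
qed

lemma exists_admissible_odd:
  assumes deg: "degree p = 2 * r + 1" and degh: "degree h < degree p"
    and rev: "[conj_reversal \<sigma> (2 * r) h = h] (mod p)"
  shows "\<exists>a. admissible \<sigma> p r a \<and> shifted_q \<sigma> r a = h"
proof -
  have "degree (conj_reversal \<sigma> (2 * r) h) < degree p"
    using deg by (intro le_less_trans[OF degree_le[of "2 * r"]]) (simp_all add: coeff_conj_reversal)
  then have hs_h: "conj_reversal \<sigma> (2 * r) h = h" using rev degh by (simp add: cong_def mod_poly_less)
  have sym: "\<sigma> (coeff h (2 * r - j)) = coeff h j" if "j \<le> 2 * r" for j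
    using arg_cong[OF hs_h, of "\<lambda>f. coeff f j"] that by (simp add: coeff_conj_reversal)
  define a where "a i = (if i \<le> r then coeff h (r + i) else 0)" for i
  have "shifted_q \<sigma> r a = h"
    unfolding a_def using degh deg sym by (intro shifted_q_upper_half) auto
  moreover have "admissible \<sigma> p r a"
    using sym[of r] deg by (simp add: admissible_def a_def mult_2)
  ultimately show ?thesis by blast
qed

lemma exists_admissible_even:
  assumes char: "(2::'a) \<noteq> 0" and irr: "irreducible p" and deg: "degree p = 2 * r"
    and degh: "degree h < degree p"
    and rev: "[conj_reversal \<sigma> (2 * r) h = h] (mod p)"
  shows "\<exists>a. admissible \<sigma> p r a \<and> [shifted_q \<sigma> r a = h] (mod p)"
proof -
  define hs where "hs = conj_reversal \<sigma> (2 * r) h"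
  let ?h0 = "coeff h 0" and ?p0 = "coeff p 0"
  have coeff_hs: "coeff hs j = (if j \<le> 2 * r then \<sigma> (coeff h (2 * r - j)) else 0)" for j
    unfolding hs_def by (rule coeff_conj_reversal)
  have h_top: "coeff h (2 * r) = 0" using degh deg by (simp add: coeff_eq_0)
  have "degree (hs - h) \<le> degree p"
    using deg degh by (intro degree_le) (auto simp: coeff_hs coeff_eq_0)
  then have "hs - h = smult (coeff (hs - h) (degree p)) p"
    using rev lead_coeff_eq_1 by (intro dvd_monic_imp_eq_smult) (auto simp: hs_def cong_iff_dvd_diff)
  then have hs_diff: "hs - h = smult (\<sigma> ?h0) p" using deg h_top by (simp add: coeff_hs)
  have hs_h: "\<sigma> (coeff h (2 * r - j)) = coeff h j + \<sigma> ?h0 * coeff p j" if "j \<le> 2 * r" for j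
    using arg_cong[OF hs_diff, of "\<lambda>f. coeff f j"] that by (simp add: coeff_hs algebra_simps)
  have "\<sigma> ?h0 * ?p0 = - ?h0" using hs_h[of 0] h_top by (simp add: eq_neg_iff_add_eq_0 add.commute)
  moreover have "(\<forall>x. \<sigma> x = x) \<Longrightarrow> ?p0 = 1"
    using coeff_0_eq_1_if_trivial_involution[OF char irr] deg by simp
  ultimately obtain l where l: "\<sigma> l = ?h0 + l * ?p0"
    and l_norm: "((\<forall>x. \<sigma> x = x) \<longrightarrow> l = 0) \<and> ((\<exists>x. \<sigma> x \<noteq> x) \<and> ?p0 \<noteq> 1 \<longrightarrow> l = \<sigma> l) \<and>
      ((\<exists>x. \<sigma> x \<noteq> x) \<and> ?p0 = 1 \<longrightarrow> l = - \<sigma> l)"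
    using exists_normalising_scalar[OF char coeff_0_mult_conj] by blast
  define g where "g = h + smult l p"
  have sym: "\<sigma> (coeff g (2 * r - j)) = coeff g j" if "j \<le> 2 * r" for j
  proof -
    have "\<sigma> (coeff p (2 * r - j)) = \<sigma> ?p0 * coeff p j"
      using conj_coeff_reflected[of j] deg that by simp
    then have "\<sigma> (coeff g (2 * r - j)) = coeff h j + (\<sigma> ?h0 + \<sigma> l * \<sigma> ?p0) * coeff p j"
      using hs_h[OF that] by (simp add: g_def algebra_simps)
    also have "\<sigma> ?h0 + \<sigma> l * \<sigma> ?p0 = l"
      using arg_cong[OF l, of \<sigma>] by simp
    finally show ?thesis by (simp add: g_def)
  qed
  define a where "a i = (if i \<le> r then coeff g (r + i) else 0)" for i
  have "shifted_q \<sigma> r a = g"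
    unfolding a_def using degh deg sym
    by (intro shifted_q_upper_half) (auto simp: g_def intro: degree_add_le)
  then have "[shifted_q \<sigma> r a = h] (mod p)"
    by (simp add: g_def cong_iff_dvd_diff dvd_smult)
  moreover have "a r = l" using h_top lead_coeff_eq_1 deg by (simp add: a_def g_def mult_2)
  then have "admissible \<sigma> p r a"
    using sym[of r] l_norm deg by (simp add: admissible_def a_def poly_0_coeff_0 mult_2)
  ultimately show ?thesis by blast
qed

lemma admissible_top_coeff_unique:
  assumes char: "(2::'a) \<noteq> 0" and deg: "degree p = 2 * r"
    and a: "admissible \<sigma> p r a" and b: "admissible \<sigma> p r b"
    and top: "\<sigma> (a r - b r) = (a r - b r) * coeff p 0"
  shows "a r = b r"
proof (cases "\<forall>x. \<sigma> x = x")
  case True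
  then show ?thesis using a b deg by (simp add: admissible_def)
next
  case False
  show ?thesis
  proof (cases "coeff p 0 = 1")
    case True
    then have "a r = - \<sigma> (a r)" "b r = - \<sigma> (b r)"
      using a b False deg by (auto simp: admissible_def poly_0_coeff_0)
    then have "\<sigma> (a r) = - a r" "\<sigma> (b r) = - b r" by (metis minus_minus)+
    then have "\<sigma> (a r - b r) = - (a r - b r)" by simp
    then have "a r - b r = - (a r - b r)" using top True by (metis mult_1_right)
    then show ?thesis using eq_neg_self_imp_0[OF char] by (metis eq_iff_diff_eq_0)
  next
    case p0: False
    then have "\<sigma> (a r) = a r" "\<sigma> (b r) = b r"
      using a b False deg by (auto simp: admissible_def poly_0_coeff_0)
    then have "(a r - b r) * (1 - coeff p 0) = 0" using top by (simp add: algebra_simps)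
    then show ?thesis using p0 by simp
  qed
qed

lemma admissible_unique:
  assumes char: "(2::'a) \<noteq> 0" and deg: "degree p = 2 * r \<or> degree p = 2 * r + 1"
    and a: "admissible \<sigma> p r a" and b: "admissible \<sigma> p r b"
    and eq: "[shifted_q \<sigma> r a = shifted_q \<sigma> r b] (mod p)"
  shows "a = b"
proof -
  define d where "d = shifted_q \<sigma> r a - shifted_q \<sigma> r b"
  have dvd: "p dvd d" using eq by (simp add: d_def cong_iff_dvd_diff)
  have degd: "degree d \<le> 2 * r"
    unfolding d_def by (intro degree_diff_le degree_shifted_q)
  have "d = 0"
  proof (cases "degree p = 2 * r")
    case False
    then have "degree d < degree p" using deg degd by auto
    then show ?thesis using dvd dvd_imp_degree_le by fastforce
  next
    case True
    then have "r > 0" using degree_pos by simp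
    have d_p: "d = smult (a r - b r) p"
      using dvd_monic_imp_eq_smult[OF dvd] degd True lead_coeff_eq_1
      by (simp add: d_def coeff_shifted_q)
    have "\<sigma> (a r) - \<sigma> (b r) = (a r - b r) * coeff p 0"
      using arg_cong[OF d_p, of "\<lambda>f. coeff f 0"] \<open>r > 0\<close> by (simp add: d_def coeff_shifted_q)
    then have "a r = b r" using admissible_top_coeff_unique[OF char True a b] by simp
    then show ?thesis using d_p by simp
  qed
  then have "shifted_q \<sigma> r a = shifted_q \<sigma> r b" by (simp add: d_def)
  then show ?thesis by (rule shifted_q_inj[rotated 2]) (use a b in \<open>simp_all add: admissible_def\<close>)
qed

theorem self_conjugate_unique_repr:
  assumes char: "(2::'a) \<noteq> 0" and irr: "irreducible p"
    and deg: "degree p = 2 * r \<or> degree p = 2 * r + 1"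
    and c: "[circ \<sigma> p c = c] (mod p)"
  shows "\<exists>!a. admissible \<sigma> p r a \<and> [q_elem \<sigma> p r a = c] (mod p)"
proof -
  define h where "h = (\<kappa> ^ r * c) mod p"
  have h: "[\<kappa> ^ r * c = h] (mod p)" by (simp add: h_def cong_def)
  have "p \<noteq> 0" using degree_pos by auto
  then have degh: "degree h < degree p"
    using degree_pos degree_mod_less'[of p "\<kappa> ^ r * c"] by (cases "h = 0") (auto simp: h_def)
  have rev: "[conj_reversal \<sigma> (2 * r) h = h] (mod p)"
    using conj_reversal_cong_if_self_conjugate[OF c h] degh deg by auto
  have repr: "[q_elem \<sigma> p r a = c] (mod p) \<longleftrightarrow> [shifted_q \<sigma> r a = h] (mod p)" for a
  proof
    assume "[q_elem \<sigma> p r a = c] (mod p)"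
    then have "[\<kappa> ^ r * q_elem \<sigma> p r a = \<kappa> ^ r * c] (mod p)" by (rule cong_mult[OF cong_refl])
    then show "[shifted_q \<sigma> r a = h] (mod p)"
      using cong_trans[OF cong_trans[OF cong_sym[OF kappa_pow_mult_q_elem]] h] by blast
  next
    assume "[shifted_q \<sigma> r a = h] (mod p)"
    then have "[\<kappa> ^ r * q_elem \<sigma> p r a = \<kappa> ^ r * c] (mod p)"
      using cong_trans[OF cong_trans[OF kappa_pow_mult_q_elem] cong_sym[OF h]] by blast
    then show "[q_elem \<sigma> p r a = c] (mod p)" by (rule kappa_pow_mult_cancel)
  qed
  obtain a where a: "admissible \<sigma> p r a" "[shifted_q \<sigma> r a = h] (mod p)"
  proof (cases "degree p = 2 * r")
    case True
    then show ?thesis using exists_admissible_even[OF char irr True degh rev] that by blast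
  next
    case False
    then show ?thesis using exists_admissible_odd[OF _ degh rev] deg that by auto
  qed
  show ?thesis unfolding repr
  proof (rule ex1I[of _ a])
    fix b assume "admissible \<sigma> p r b \<and> [shifted_q \<sigma> r b = h] (mod p)"
    then show "b = a"
      using admissible_unique[OF char deg _ a(1)] cong_trans[OF _ cong_sym[OF a(2)]] by blast
  qed (use a in blast)
qed

end

theorem lemma7:
  fixes \<sigma> :: "'a::field \<Rightarrow> 'a" and p :: "'a poly" and r :: nat
  assumes char: "(2::'a) \<noteq> 0"
    and inv: "involution \<sigma>"
    and irr: "irreducible p"
    and p0: "coeff p 0 \<noteq> 0"
    and pvee: "p = vee \<sigma> p"
    and deg: "degree p = 2 * r \<or> degree p = 2 * r + 1"
  shows "\<forall>c. eq_mod p (circ \<sigma> p c) c \<longrightarrow>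
    (\<exists>!a. (\<forall>i>r. a i = 0) \<and> \<sigma> (a 0) = a 0 \<and>
       (degree p = 2 * r \<longrightarrow>
          ((\<forall>x. \<sigma> x = x) \<longrightarrow> a r = 0) \<and>
          ((\<exists>x. \<sigma> x \<noteq> x) \<and> poly p 0 \<noteq> 1 \<longrightarrow> a r = \<sigma> (a r)) \<and>
          ((\<exists>x. \<sigma> x \<noteq> x) \<and> poly p 0 = 1 \<longrightarrow> a r = - \<sigma> (a r))) \<and>
       eq_mod p (q_elem \<sigma> p r a) c)"
proof -
  interpret self_reciprocal \<sigma> p
    using inv p0 pvee degree_pos_if_irreducible[OF irr] by unfold_locales
  show ?thesis
    using self_conjugate_unique_repr[OF char irr deg]
    by (simp add: admissible_def eq_mod_def cong_def)
qed

end
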